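(* Let $U\in\mathcal{U}_c$ and suppose that $\eta_U$ is differentiable with $\eta_U'(x)/\eta_U(x)=o(1/x)$ as $x\to\infty$. Then \[ \frac{\omega_U'(x)}{\omega_U(x)}\le o(1/x)\quad\text{as } x\to\infty. \]
   Context: The class $\mathcal{U}$: $U(t)=u(e^{it})$ with $u$ real-valued continuous on $\mathbb{T}$, $u(z)=u(\bar z)$, smooth except possibly at $1$, $U$ even, increasing on $[0,\pi]$, $U(0)=0$, and $h_U(t):=\int_t^\pi U(x)x^{-2}dx\to\infty$ as $t\to0^+$. $\mathcal{U}_c$: those $U\in\mathcal{U}$ with $U'(t)/U(t)\le\alpha/t$ for $0<t\le\pi/2$ for some $0<\alpha<1$. $\eta_U$ is defined by $U(t)=e^{-\eta_U(|\log t|)}$ for $0<t\le1$ with $U(t)\le e^{-1}$; $\omega_U$ is the (increasing) function defined by $\eta_U(x/\omega_U(x))=\omega_U(x)$ for $x\ge0$ with $\eta_U(x)\ge1$. *)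

theory Defs
  imports "HOL-Analysis.Analysis" "HOL-Library.Landau_Symbols"
begin

text \<open>The points of the real line that correspond to z = 1 on the unit circle
  (via t \<mapsto> e^{it}): the integer multiples of 2 pi.\<close>
definition at_one_points :: "real set" where
  "at_one_points = {t. \<exists>k::int. t = 2 * pi * of_int k}"

text \<open>U(t) = u(e^{it}) with u real-valued continuous on the unit circle,
  u(z) = u(conj z), u smooth except possibly at 1 (i.e. U is C-infinity away from
  the multiples of 2 pi), U even, increasing on [0,pi], U(0)=0 and
  h_U(t) = integral_t^pi U(x)/x^2 dx tends to infinity as t -> 0+.\<close>
definition class_U :: "(real \<Rightarrow> real) \<Rightarrow> bool" where
  "class_U U \<longleftrightarrow>
     (\<exists>u :: complex \<Rightarrow> real.
        continuous_on (sphere 0 1) u \<and>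
        (\<forall>z\<in>sphere 0 1. u z = u (cnj z)) \<and>
        (\<forall>t. U t = u (cis t))) \<and>
     (\<forall>n::nat. \<forall>t. t \<notin> at_one_points \<longrightarrow> ((deriv ^^ n) U) differentiable (at t)) \<and>
     (\<forall>t. U (- t) = U t) \<and>
     mono_on {0..pi} U \<and>
     U 0 = 0 \<and>
     filterlim (\<lambda>t. integral {t..pi} (\<lambda>x. U x / x ^ 2)) at_top (at_right 0)"

definition class_Uc :: "(real \<Rightarrow> real) \<Rightarrow> bool" where
  "class_Uc U \<longleftrightarrow> class_U U \<and>
     (\<exists>\<alpha>::real. 0 < \<alpha> \<and> \<alpha> < 1 \<and>
        (\<forall>t. 0 < t \<and> t \<le> pi / 2 \<longrightarrow> deriv U t / U t \<le> \<alpha> / t))"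

text \<open>eta_U: U(t) = exp(-eta_U(|log t|)) for 0 < t \<le> 1, i.e. eta_U(x) = - ln U(e^{-x})
  for x \<ge> 0.  It is meaningful (the paper's domain) where U(e^{-x}) \<le> e^{-1}.\<close>
definition eta_dom :: "(real \<Rightarrow> real) \<Rightarrow> real \<Rightarrow> bool" where
  "eta_dom U x \<longleftrightarrow> 0 \<le> x \<and> U (exp (- x)) \<le> exp (- 1)"

definition eta_U :: "(real \<Rightarrow> real) \<Rightarrow> real \<Rightarrow> real" where
  "eta_U U x = - ln (U (exp (- x)))"

definition omega_U :: "(real \<Rightarrow> real) \<Rightarrow> real \<Rightarrow> real" where
  "omega_U U x = (THE w. 0 < w \<and> eta_dom U (x / w) \<and> eta_U U (x / w) = w)"

end

theory Submission imports Defs begin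

text \<open>Writing \<open>G(s) = s \<eta>(s)\<close>, the defining equation of \<open>\<omega>\<close> says \<open>\<omega>(G(s)) = \<eta>(s)\<close>, so
  \<open>\<omega> = \<eta> \<circ> G\<^sup>-\<^sup>1\<close>. By the chain rule and the inverse function theorem, at \<open>x = G(s)\<close>
  \<open>\<omega>'(x)/\<omega>(x) = \<eta>'(s) / (\<eta>(s) G'(s))\<close> with \<open>G'(s) = \<eta>(s) + s \<eta>'(s) \<ge> \<eta>(s)/2\<close> for large \<open>s\<close>,
  hence \<open>|\<omega>'(x)/\<omega>(x)| \<le> 2 |\<eta>'(s)/\<eta>(s)| / \<eta>(s) = o(1/(s \<eta>(s))) = o(1/x)\<close>.\<close>

lemma class_U_continuous:
  assumes "class_U U" shows "continuous_on UNIV U"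
proof -
  obtain u :: "complex \<Rightarrow> real" where u: "continuous_on (sphere 0 1) u" "\<forall>t. U t = u (cis t)"
    using assms unfolding class_U_def by blast
  have "continuous_on UNIV (u \<circ> cis)"
    unfolding o_def by (rule continuous_on_compose2[OF u(1)]) (auto intro!: continuous_intros)
  moreover have "U = u \<circ> cis" using u(2) by auto
  ultimately show ?thesis by simp
qed

text \<open>If \<open>U\<close> vanished on some \<open>[0, t]\<close>, the integral \<open>h\<^sub>U\<close> would be constant near \<open>0\<close>.\<close>
lemma class_U_pos:
  assumes "class_U U" "0 < t" "t \<le> pi" shows "U t > 0"
proof (rule ccontr)
  assume "\<not> U t > 0"
  have mono: "mono_on {0..pi} U" and U0: "U 0 = 0"
    and lim: "filterlim (\<lambda>t. integral {t..pi} (\<lambda>x. U x / x ^ 2)) at_top (at_right 0)"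
    using assms(1) unfolding class_U_def by auto
  have vanish: "U x = 0" if "0 \<le> x" "x \<le> t" for x
  proof -
    have "U 0 \<le> U x" "U x \<le> U t"
      using that assms by (auto intro!: mono_onD[OF mono])
    then show ?thesis using U0 \<open>\<not> U t > 0\<close> by linarith
  qed
  define C where "C = integral {t..pi} (\<lambda>x. U x / x ^ 2)"
  have const: "integral {s..pi} (\<lambda>x. U x / x ^ 2) = C" if "0 < s" "s < t" for s
  proof -
    have "(\<lambda>x. U x / x ^ 2) integrable_on {s..pi}"
      by (rule integrable_continuous_interval)
        (use that in \<open>auto intro!: continuous_intros
          continuous_on_subset[OF class_U_continuous[OF assms(1)]]\<close>)
    then have "integral {s..pi} (\<lambda>x. U x / x ^ 2) = integral {s..t} (\<lambda>x. U x / x ^ 2) + C"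
      unfolding C_def using that assms
      by (intro Henstock_Kurzweil_Integration.integral_combine[symmetric]) auto
    moreover have "integral {s..t} (\<lambda>x. U x / x ^ 2) = integral {s..t} (\<lambda>x. 0)"
      by (rule integral_cong) (use vanish that in auto)
    ultimately show ?thesis by simp
  qed
  have "\<forall>\<^sub>F s in at_right 0. integral {s..pi} (\<lambda>x. U x / x ^ 2) > C"
    using lim unfolding filterlim_at_top_dense by blast
  moreover have "\<forall>\<^sub>F s in at_right 0. 0 < s \<and> s < t"
    using assms(2) by (auto simp: eventually_at_right_field)
  ultimately have "\<forall>\<^sub>F s in at_right (0::real). False"
    by eventually_elim (use const in force)
  then show False by simp
qed

lemma class_U_pos_exp:
  assumes "class_U U" "0 \<le> s" shows "U (exp (- s)) > 0"
proof (rule class_U_pos[OF assms(1)])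
  have "exp (- s) \<le> 1" using assms(2) by simp
  then show "exp (- s) \<le> pi" using pi_gt3 by linarith
qed simp

lemma eta_U_mono:
  assumes "class_U U" "0 \<le> s" "s \<le> t" shows "eta_U U s \<le> eta_U U t"
proof -
  have mono: "mono_on {0..pi} U" using assms(1) unfolding class_U_def by blast
  have "exp (- t) \<le> exp (- s)" "exp (- s) \<le> 1"
    using assms(2,3) by auto
  then have "exp (- t) \<le> pi" "exp (- s) \<le> pi"
    using pi_gt3 by linarith+
  then have "U (exp (- t)) \<le> U (exp (- s))"
    using mono_onD[OF mono, of "exp (- t)" "exp (- s)"] \<open>exp (- t) \<le> exp (- s)\<close> by simp
  moreover have "0 < U (exp (- t))"
    using assms by (intro class_U_pos_exp) auto
  ultimately show ?thesis
    unfolding eta_U_def by simp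
qed

lemma eta_U_ge_1:
  assumes "class_U U" "eta_dom U s" shows "1 \<le> eta_U U s"
proof -
  have "0 < U (exp (- s))" "U (exp (- s)) \<le> exp (- 1)"
    using assms class_U_pos_exp[OF assms(1), of s] unfolding eta_dom_def by auto
  then have "ln (U (exp (- s))) \<le> ln (exp (- 1))"
    by (subst ln_le_cancel_iff) auto
  then show ?thesis unfolding eta_U_def by simp
qed

lemma eventually_eta_dom:
  assumes "class_U U" shows "\<forall>\<^sub>F x in at_top. eta_dom U x"
proof -
  have "isCont U 0"
    using class_U_continuous[OF assms] by (simp add: continuous_on_eq_continuous_at)
  moreover have "((\<lambda>x::real. exp (- x)) \<longlongrightarrow> 0) at_top"
    by (rule filterlim_compose[OF exp_at_bot filterlim_uminus_at_bot_at_top])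
  ultimately have "((\<lambda>x. U (exp (- x))) \<longlongrightarrow> U 0) at_top"
    by (rule isCont_tendsto_compose)
  moreover have "U 0 < exp (- 1)" using assms unfolding class_U_def by simp
  ultimately have "\<forall>\<^sub>F x in at_top. U (exp (- x)) < exp (- 1)"
    by (rule order_tendstoD)
  then show ?thesis
    unfolding eta_dom_def using eventually_ge_at_top[of 0]
    by eventually_elim (simp add: less_imp_le)
qed

lemma eta_U_product_strict_mono:
  assumes "class_U U" "eta_dom U s" "s < t"
  shows "s * eta_U U s < t * eta_U U t"
proof -
  have "0 \<le> s" using assms(2) unfolding eta_dom_def by simp
  have "s * eta_U U s < t * eta_U U s"
    using eta_U_ge_1[OF assms(1,2)] assms(3) by simp
  also have "\<dots> \<le> t * eta_U U t"
    using eta_U_mono[OF assms(1) \<open>0 \<le> s\<close>] \<open>0 \<le> s\<close> assms(3)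
    by (intro mult_left_mono) auto
  finally show ?thesis .
qed

lemma omega_U_eta_U:
  assumes "class_U U" "eta_dom U s"
  shows "omega_U U (s * eta_U U s) = eta_U U s"
  unfolding omega_U_def
proof (rule the_equality)
  show "0 < eta_U U s \<and> eta_dom U (s * eta_U U s / eta_U U s) \<and>
      eta_U U (s * eta_U U s / eta_U U s) = eta_U U s"
    using eta_U_ge_1[OF assms] assms(2) by simp
next
  fix w assume w: "0 < w \<and> eta_dom U (s * eta_U U s / w) \<and> eta_U U (s * eta_U U s / w) = w"
  define t where "t = s * eta_U U s / w"
  have "eta_dom U t" and eq: "t * eta_U U t = s * eta_U U s"
    using w unfolding t_def by simp_all
  have "t = s"
  proof (rule ccontr)
    assume "t \<noteq> s"
    then show False
      using eta_U_product_strict_mono[OF assms(1) assms(2), of t]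
        eta_U_product_strict_mono[OF assms(1) \<open>eta_dom U t\<close>, of s] eq
      by (cases t s rule: linorder_cases) auto
  qed
  then show "w = eta_U U s"
    using w unfolding t_def by simp
qed

text \<open>The bound on \<open>s E'(s)\<close> gives \<open>(s E(s))' \<ge> E(s)/2 > 0\<close>, so \<open>s \<mapsto> s E(s)\<close> is invertible
  on \<open>(b, \<infinity>)\<close>, with inverse \<open>y \<mapsto> y / \<omega>(y)\<close>.\<close>
locale product_parametrization =
  fixes E \<omega> :: "real \<Rightarrow> real" and b :: real
  assumes nonneg: "0 \<le> b"
    and E_ge_1: "\<And>s. b \<le> s \<Longrightarrow> 1 \<le> E s"
    and E_differentiable: "\<And>s. b \<le> s \<Longrightarrow> E differentiable (at s)"
    and deriv_E_bound: "\<And>s. b \<le> s \<Longrightarrow> \<bar>s * deriv E s\<bar> \<le> E s / 2"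
    and omega_product: "\<And>s. b \<le> s \<Longrightarrow> \<omega> (s * E s) = E s"
begin

lemma DERIV_E: "b \<le> s \<Longrightarrow> (E has_field_derivative deriv E s) (at s)"
  using E_differentiable by (simp add: DERIV_deriv_iff_real_differentiable)

lemma DERIV_product:
  "b \<le> s \<Longrightarrow> ((\<lambda>s. s * E s) has_field_derivative E s + s * deriv E s) (at s)"
  by (auto intro!: derivative_eq_intros DERIV_E)

lemma deriv_product_ge: "b \<le> s \<Longrightarrow> E s / 2 \<le> E s + s * deriv E s"
  using deriv_E_bound[of s] by (simp add: abs_le_iff)

lemma continuous_on_product: "continuous_on {b..} (\<lambda>s. s * E s)"
  using DERIV_product DERIV_isCont by (force intro: continuous_at_imp_continuous_on)

lemma product_strict_mono:
  assumes "b \<le> s" "s < t" shows "s * E s < t * E t"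
proof (rule DERIV_pos_imp_increasing[OF assms(2)])
  fix x assume "s \<le> x" "x \<le> t"
  then have "b \<le> x" using assms(1) by simp
  show "\<exists>y. ((\<lambda>s. s * E s) has_real_derivative y) (at x) \<and> 0 < y"
    using DERIV_product[OF \<open>b \<le> x\<close>] deriv_product_ge[OF \<open>b \<le> x\<close>] E_ge_1[OF \<open>b \<le> x\<close>]
    by force
qed

lemma product_surj:
  assumes "b \<le> a" "a * E a \<le> x" shows "\<exists>s. a \<le> s \<and> s \<le> x \<and> s * E s = x"
proof -
  have "a \<le> a * E a"
    using mult_left_mono[OF E_ge_1[OF assms(1)], of a] assms(1) nonneg by simp
  then have "b \<le> x" "a \<le> x" using assms by linarith+
  then have "x \<le> x * E x"
    using mult_left_mono[OF E_ge_1[of x], of x] nonneg by simp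
  then show ?thesis
    using \<open>a \<le> x\<close> assms continuous_on_subset[OF continuous_on_product, of "{a..x}"]
    by (intro IVT') auto
qed

lemma omega_eq_E_of_inverse:
  assumes "b * E b < y" shows "\<omega> y = E (y / \<omega> y)"
proof -
  obtain s where "b \<le> s" "s * E s = y"
    using product_surj[of b y] assms by auto
  moreover have "y / \<omega> y = s"
    using omega_product[of s] E_ge_1[of s] \<open>b \<le> s\<close> unfolding \<open>s * E s = y\<close>[symmetric]
    by simp
  ultimately show ?thesis
    using omega_product[of s] by simp
qed

lemma DERIV_omega:
  assumes "b < s"
  shows "(\<omega> has_field_derivative deriv E s / (E s + s * deriv E s)) (at (s * E s))"
proof -
  define D where "D = E s + s * deriv E s"
  have "D \<noteq> 0" using deriv_product_ge[of s] E_ge_1[of s] assms unfolding D_def by simp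
  have "((\<lambda>y. y / \<omega> y) has_derivative (\<lambda>y. inverse D * y)) (at (s * E s))"
  proof (rule has_derivative_inverse_strong[of "{b<..}" s "\<lambda>s. s * E s"])
    show "continuous_on {b<..} (\<lambda>s. s * E s)"
      by (rule continuous_on_subset[OF continuous_on_product]) auto
    show "t * E t / \<omega> (t * E t) = t" if "t \<in> {b<..}" for t
      using that omega_product[of t] E_ge_1[of t] by simp
    show "((\<lambda>s. s * E s) has_derivative (*) D) (at s)"
      using DERIV_product[of s] assms unfolding D_def by (simp add: has_field_derivative_def)
    show "(*) D \<circ> (\<lambda>y. inverse D * y) = id"
      using \<open>D \<noteq> 0\<close> by (auto simp: fun_eq_iff)
  qed (use assms in auto)
  then have "((\<lambda>y. y / \<omega> y) has_field_derivative inverse D) (at (s * E s))"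
    by (simp add: has_field_derivative_def)
  moreover have "(E has_field_derivative deriv E s) (at (s * E s / \<omega> (s * E s)))"
    using omega_product[of s] E_ge_1[of s] DERIV_E[of s] assms by simp
  ultimately have "((\<lambda>y. E (y / \<omega> y)) has_field_derivative deriv E s * inverse D) (at (s * E s))"
    by (rule DERIV_chain2[rotated])
  then have "((\<lambda>y. E (y / \<omega> y)) has_field_derivative deriv E s / D) (at (s * E s))"
    by (simp only: divide_inverse)
  then show ?thesis
    unfolding D_def[symmetric]
  proof (rule has_field_derivative_transform_within_open[of _ _ _ "{b * E b<..}"])
    show "s * E s \<in> {b * E b<..}" using product_strict_mono[of b s] assms by simp
  qed (use omega_eq_E_of_inverse in auto)
qed

lemma eventually_omega_differentiable: "\<forall>\<^sub>F x in at_top. \<omega> differentiable (at x)"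
  unfolding eventually_at_top_dense
proof (intro exI allI impI)
  fix x assume "b * E b < x"
  then obtain s where "b \<le> s" "s * E s = x"
    using product_surj[of b x] by auto
  moreover have "s \<noteq> b" using \<open>b * E b < x\<close> \<open>s * E s = x\<close> by auto
  ultimately show "\<omega> differentiable (at x)"
    using DERIV_omega[of s] unfolding real_differentiable_def by force
qed

lemma log_deriv_omega_bound:
  assumes "b < s"
  shows "\<bar>deriv \<omega> (s * E s) / \<omega> (s * E s)\<bar> \<le> 2 * \<bar>deriv E s / E s\<bar> / E s"
proof -
  have E1: "1 \<le> E s" and D: "E s / 2 \<le> E s + s * deriv E s"
    using E_ge_1[of s] deriv_product_ge[of s] assms by auto
  have "\<bar>deriv \<omega> (s * E s) / \<omega> (s * E s)\<bar>
      = \<bar>deriv E s / E s\<bar> / (E s + s * deriv E s)"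
    using DERIV_imp_deriv[OF DERIV_omega[OF assms]] omega_product[of s] assms E1 D
    by (simp add: abs_div)
  also have "\<dots> \<le> \<bar>deriv E s / E s\<bar> / (E s / 2)"
    using E1 D by (intro divide_left_mono) auto
  also have "\<dots> = 2 * \<bar>deriv E s / E s\<bar> / E s"
    by simp
  finally show ?thesis .
qed

end

lemma log_deriv_small_o_of_product_parametrization:
  fixes E \<omega> :: "real \<Rightarrow> real"
  assumes "\<forall>\<^sub>F s in at_top. 1 \<le> E s"
    and "\<forall>\<^sub>F s in at_top. E differentiable (at s)"
    and "\<forall>\<^sub>F s in at_top. \<omega> (s * E s) = E s"
    and small: "(\<lambda>s. deriv E s / E s) \<in> o[at_top](\<lambda>s. 1 / s)"
  shows "(\<forall>\<^sub>F x in at_top. \<omega> differentiable (at x)) \<and>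
    (\<lambda>x. deriv \<omega> x / \<omega> x) \<in> o[at_top](\<lambda>x. 1 / x)"
proof -
  have small_at: "\<forall>\<^sub>F s in at_top. norm (deriv E s / E s) \<le> c * norm (1 / s)" if "0 < c" for c
    using landau_o.smallD[OF small that] .
  have "\<forall>\<^sub>F s in at_top. 0 < s \<and> 1 \<le> E s \<and> E differentiable (at s) \<and>
      \<bar>s * deriv E s\<bar> \<le> E s / 2 \<and> \<omega> (s * E s) = E s"
    using assms(1-3) small_at[of "1 / 2", simplified] eventually_gt_at_top[of 0]
  proof eventually_elim
    case (elim s)
    then have "\<bar>deriv E s\<bar> / E s \<le> 1 / (2 * s)" by (simp add: abs_div)
    then have "\<bar>s * deriv E s\<bar> \<le> E s / 2"
      using elim by (simp add: abs_mult field_simps)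
    with elim show ?case by simp
  qed
  then obtain b where b: "\<And>s. b \<le> s \<Longrightarrow> 0 < s \<and> 1 \<le> E s \<and> E differentiable (at s) \<and>
      \<bar>s * deriv E s\<bar> \<le> E s / 2 \<and> \<omega> (s * E s) = E s"
    unfolding eventually_at_top_linorder by blast
  interpret product_parametrization E \<omega> b
  proof
    show "0 \<le> b" using b[of b] by simp
  qed (use b in auto)
  have "(\<lambda>x. deriv \<omega> x / \<omega> x) \<in> o[at_top](\<lambda>x. 1 / x)"
  proof (rule landau_o.smallI)
    fix c :: real assume "0 < c"
    obtain S where "b \<le> S" and S: "\<And>s. S \<le> s \<Longrightarrow> \<bar>deriv E s / E s\<bar> \<le> c / 2 * \<bar>1 / s\<bar>"
      using eventually_conj[OF small_at eventually_ge_at_top[of b], of "c / 2"]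
        \<open>0 < c\<close> unfolding eventually_at_top_linorder by auto
    show "\<forall>\<^sub>F x in at_top. norm (deriv \<omega> x / \<omega> x) \<le> c * norm (1 / x)"
      unfolding eventually_at_top_dense
    proof (intro exI allI impI)
      fix x assume "S * E S < x"
      then obtain s where "S \<le> s" "s * E s = x"
        using product_surj[OF \<open>b \<le> S\<close>, of x] by auto
      with \<open>S * E S < x\<close> have "S < s" by (cases "s = S") auto
      have s: "0 < s" "1 \<le> E s" using b[of s] \<open>b \<le> S\<close> \<open>S < s\<close> by auto
      have "\<bar>deriv \<omega> x / \<omega> x\<bar> \<le> 2 * \<bar>deriv E s / E s\<bar> / E s"
        using log_deriv_omega_bound[of s] \<open>b \<le> S\<close> \<open>S < s\<close> \<open>s * E s = x\<close> by simp
      also have "\<dots> \<le> 2 * (c / 2 * (1 / s)) / E s"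
        using S[of s] \<open>S < s\<close> s by (intro divide_right_mono mult_left_mono) auto
      also have "\<dots> = c * \<bar>1 / x\<bar>"
        using s \<open>s * E s = x\<close>[symmetric] by simp
      finally show "norm (deriv \<omega> x / \<omega> x) \<le> c * norm (1 / x)" by simp
    qed
  qed
  with eventually_omega_differentiable show ?thesis by blast
qed

theorem lemma6p4:
  fixes U :: "real \<Rightarrow> real"
  assumes "class_Uc U"
    and "\<forall>x. eta_dom U x \<longrightarrow> eta_U U differentiable (at x)"
    and "(\<lambda>x. deriv (eta_U U) x / eta_U U x) \<in> o[at_top](\<lambda>x. 1 / x)"
  shows "(\<forall>\<^sub>F x in at_top. omega_U U differentiable (at x)) \<and>
         (\<exists>g :: real \<Rightarrow> real. g \<in> o[at_top](\<lambda>x. 1 / x) \<and>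
            (\<forall>\<^sub>F x in at_top. deriv (omega_U U) x / omega_U U x \<le> g x))"
proof -
  have U: "class_U U" using assms(1) unfolding class_Uc_def by blast
  have "(\<forall>\<^sub>F x in at_top. omega_U U differentiable (at x)) \<and>
      (\<lambda>x. deriv (omega_U U) x / omega_U U x) \<in> o[at_top](\<lambda>x. 1 / x)"
  proof (rule log_deriv_small_o_of_product_parametrization[OF _ _ _ assms(3)])
    show "\<forall>\<^sub>F s in at_top. 1 \<le> eta_U U s"
      using eventually_eta_dom[OF U] by eventually_elim (rule eta_U_ge_1[OF U])
    show "\<forall>\<^sub>F s in at_top. eta_U U differentiable (at s)"
      using eventually_eta_dom[OF U] by eventually_elim (use assms(2) in blast)
    show "\<forall>\<^sub>F s in at_top. omega_U U (s * eta_U U s) = eta_U U s"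
      using eventually_eta_dom[OF U] by eventually_elim (rule omega_U_eta_U[OF U])
  qed
  then show ?thesis
    by (auto intro!: exI[of _ "\<lambda>x. deriv (omega_U U) x / omega_U U x"])
qed

end
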